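(* Let $0\le i\le m-1$, let $u\in I_i$, and let $j\ge m-i$. Then $$\mathrm{ord}_p\big(p^j\gamma_{i,j}\big)-\frac{\deg(p^ju)}{p-1}\ \ge\ p^{\,j-(m-i)+1}-1.$$
   Context: Let $p$ be a prime, $q=p^a$, and let $W_m$ be the Witt vectors of length $m$. Write $f\in W_m(\mathbb{F}_q[x_1^{\pm1},\dots,x_n^{\pm1}])$ uniquely as $f=\sum_{i=0}^{m-1}\sum_{u\in I_i}\lambda_i(a_{iu}x^u)$, where $\lambda_i$ places an element in the $i$-th Witt coordinate and zeros elsewhere, $I_i\subset\mathbb{Z}^n$ is finite and $a_{iu}\in\mathbb{F}_q^\times$. Let $\Delta$ be the convex hull of $\{p^{m-i-1}u:u\in I_i\}\cup\{0\}$, assumed $n$-dimensional, and let $\deg(u)=\min\{c\ge0:u\in c\Delta\}$. Let $\mathrm{ord}_p(p)=1$, let $E(t)=\exp(\sum_{i\ge0}t^{p^i}/p^i)$, and fix a primitive $p^m$-th root of unity $\zeta$. For $l=1,\dots,m$, $\pi_l$ is the unique root of $\sum_{i\ge0}t^{p^i}/p^i=0$ with $\mathrm{ord}_p\pi_l=\frac1{p^{l-1}(p-1)}$ and $E(\pi_l)=\zeta^{p^{m-l}}$. Define $$\gamma_{i,j}=\sum_{l=0}^{j}\frac{\pi_{m-i}^{p^l}}{p^l}.$$ *)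

theory Defs
  imports "HOL-Analysis.Analysis" "HOL-Computational_Algebra.Formal_Power_Series"
begin

definition valuation :: "('a::field \<Rightarrow> ereal) \<Rightarrow> bool" where
  "valuation v \<longleftrightarrow> (\<forall>x. v x = \<infinity> \<longleftrightarrow> x = 0) \<and> (\<forall>x. v x > -\<infinity>) \<and>
     (\<forall>x y. v (x * y) = v x + v y) \<and> (\<forall>x y. v (x + y) \<ge> min (v x) (v y))"

definition val_sums :: "('a::field \<Rightarrow> ereal) \<Rightarrow> (nat \<Rightarrow> 'a) \<Rightarrow> 'a \<Rightarrow> bool" where
  "val_sums v f s \<longleftrightarrow> (\<forall>B::real. \<forall>\<^sub>F n in sequentially. v ((\<Sum>l<n. f l) - s) \<ge> ereal B)"

text \<open>The series L(t) = sum_{i>=0} t^(p^i)/p^i as a formal power series over Q,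
and the Artin--Hasse exponential E(t) = exp(L(t)).\<close>
definition AH_log :: "nat \<Rightarrow> rat fps" where
  "AH_log p = Abs_fps (\<lambda>k. if \<exists>i. k = p ^ i then 1 / of_nat k else 0)"

definition AH_exp :: "nat \<Rightarrow> rat fps" where
  "AH_exp p = fps_compose (fps_exp 1) (AH_log p)"

definition vec_of :: "int ^ 'n \<Rightarrow> real ^ 'n" where
  "vec_of u = (\<chi> k. real_of_int (u $ k))"

definition Delta :: "nat \<Rightarrow> nat \<Rightarrow> (nat \<Rightarrow> (int ^ 'n) set) \<Rightarrow> (real ^ 'n) set" where
  "Delta p m I = convex hull ({(real p ^ (m - i - 1)) *\<^sub>R vec_of u | i u. i < m \<and> u \<in> I i} \<union> {0})"

definition deg :: "(real ^ 'n) set \<Rightarrow> real ^ 'n \<Rightarrow> real" where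
  "deg D x = Inf {c::real. c \<ge> 0 \<and> x \<in> (\<lambda>y. c *\<^sub>R y) ` D}"

end

theory Submission
  imports Defs
begin

text \<open>Put k = m - i and a = ord(pi_k) = 1/(p^(k-1) (p - 1)). The l-th term of the series
  defining pi_k has valuation p^l a - l, which is nondecreasing in l once l >= k - 1. As the
  whole series sums to 0, gamma_{i,j} is minus its tail, so ord(gamma_{i,j}) >= p^(j+1) a - (j+1)
  and ord(p^j gamma_{i,j}) >= p^(e+1)/(p - 1) - 1 with e = j - k + 1. On the other side
  p^(k-1) u is one of the points spanning Delta, so deg(p^j u) <= p^e, and
  p^(e+1)/(p - 1) - p^e/(p - 1) = p^e. Of the hypotheses on pi, only L(pi_k) = 0 and the value
  of ord(pi_k) are needed.\<close>

lemma valuation_finite: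
  assumes "valuation v" "x \<noteq> 0"
  obtains r where "v x = ereal r"
  using assms unfolding valuation_def by (cases "v x") auto

lemma valuation_zero: "valuation v \<Longrightarrow> v 0 = \<infinity>"
  by (simp add: valuation_def)

lemma valuation_mult: "valuation v \<Longrightarrow> v (x * y) = v x + v y"
  by (simp add: valuation_def)

lemma valuation_add_ge: "valuation v \<Longrightarrow> min (v x) (v y) \<le> v (x + y)"
  by (simp add: valuation_def)

lemma valuation_one:
  assumes "valuation v"
  shows "v 1 = 0"
proof -
  obtain r where r: "v 1 = ereal r"
    using valuation_finite[OF assms, of 1] by auto
  have "v 1 = v 1 + v 1"
    using valuation_mult[OF assms, of 1 1] by simp
  with r show ?thesis
    by (simp add: zero_ereal_def)
qed

lemma valuation_minus:
  assumes "valuation v"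
  shows "v (- x) = v x"
proof -
  obtain r where r: "v (- 1) = ereal r"
    using valuation_finite[OF assms, of "- 1"] by auto
  have "ereal r + ereal r = 0"
    using valuation_mult[OF assms, of "- 1" "- 1"] valuation_one[OF assms] r by simp
  then have "v (- 1) = 0"
    using r by (simp add: zero_ereal_def)
  then show ?thesis
    using valuation_mult[OF assms, of "- 1" x] by simp
qed

lemma valuation_inverse:
  assumes "valuation v" "v x = ereal r"
  shows "v (inverse x) = ereal (- r)"
proof -
  have "x \<noteq> 0"
    using assms valuation_zero by force
  then obtain s where s: "v (inverse x) = ereal s"
    using valuation_finite[OF assms(1), of "inverse x"] by auto
  have "ereal r + ereal s = 0"
    using valuation_mult[OF assms(1), of x "inverse x"] valuation_one[OF assms(1)] \<open>x \<noteq> 0\<close>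
      assms(2) s by simp
  with s show ?thesis
    by (simp add: zero_ereal_def)
qed

lemma valuation_power:
  assumes "valuation v" "v x = ereal r"
  shows "v (x ^ n) = ereal (real n * r)"
proof (induction n)
  case 0
  then show ?case
    using valuation_one[OF assms(1)] by (simp add: zero_ereal_def)
next
  case (Suc n)
  then show ?case
    using valuation_mult[OF assms(1), of x "x ^ n"] assms(2) by (simp add: algebra_simps)
qed

lemma valuation_sum_ge:
  assumes "valuation v" "\<And>l. l \<in> A \<Longrightarrow> B \<le> v (f l)"
  shows "B \<le> v (\<Sum>l\<in>A. f l)"
  using assms(2)
proof (induction A rule: infinite_finite_induct)
  case (insert l F)
  then have "B \<le> min (v (f l)) (v (sum f F))"
    by simp
  also have "\<dots> \<le> v (f l + sum f F)"
    by (rule valuation_add_ge[OF assms(1)])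
  finally show ?case
    using insert.hyps by simp
qed (simp_all add: valuation_zero[OF assms(1)])

text \<open>For a series summing to 0, each partial sum is minus the corresponding tail.\<close>
lemma val_sums_zero_partial_sum_ge:
  assumes "valuation v" "val_sums v f 0" "\<And>l. N \<le> l \<Longrightarrow> ereal B \<le> v (f l)"
  shows "ereal B \<le> v (\<Sum>l<N. f l)"
proof -
  obtain n where n: "N \<le> n" "ereal B \<le> v (\<Sum>l<n. f l)"
    using assms(2) unfolding val_sums_def eventually_sequentially
    by (metis diff_zero nat_le_linear)
  have split: "(\<Sum>l<N. f l) = (\<Sum>l<n. f l) + - (\<Sum>l\<in>{N..<n}. f l)"
    using sum.atLeastLessThan_concat[of 0 N n f] n(1) by (simp add: atLeast0LessThan eq_diff_eq)
  have "ereal B \<le> v (- (\<Sum>l\<in>{N..<n}. f l))"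
    unfolding valuation_minus[OF assms(1)] by (rule valuation_sum_ge[OF assms(1)]) (simp add: assms(3))
  with n(2) show ?thesis
    unfolding split by (metis min.bounded_iff order_trans valuation_add_ge[OF assms(1)])
qed

lemma power_mult_minus_mono:
  fixes q a :: real
  assumes "1 \<le> q" "1 \<le> q ^ n * a * (q - 1)" "n \<le> l" "l \<le> l'"
  shows "q ^ l * a - l \<le> q ^ l' * a - l'"
  using assms(4)
proof (induction l' rule: dec_induct)
  case (step l')
  have "0 \<le> a * (q - 1)"
    using assms(1,2) by (smt (verit) mult.assoc mult_nonneg_nonpos zero_le_power)
  moreover have "q ^ n \<le> q ^ l'"
    using assms(1,3) step.hyps(1) by (simp add: power_increasing)
  ultimately have "q ^ n * a * (q - 1) \<le> q ^ l' * a * (q - 1)"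
    by (metis mult.assoc mult_right_mono)
  then show ?case
    using step.IH assms(2) by (simp add: algebra_simps)
qed simp

lemma valuation_AH_log_term:
  assumes "valuation v" "v (of_nat p) = 1" "v x = ereal a"
  shows "v (x ^ p ^ l / of_nat (p ^ l)) = ereal (real p ^ l * a - l)"
proof -
  have "v (of_nat (p ^ l)) = ereal (real l)"
    using valuation_power[OF assms(1), of "of_nat p" 1 l] assms(2) by (simp add: one_ereal_def)
  then show ?thesis
    using valuation_power[OF assms(1,3), of "p ^ l"] valuation_inverse[OF assms(1)]
      valuation_mult[OF assms(1)] by (simp add: divide_inverse)
qed

lemma AH_log_partial_sum_ord_ge:
  assumes "valuation v" "v (of_nat p) = 1" "1 \<le> p" "v x = ereal a"
    and "1 \<le> real p ^ n * a * (real p - 1)" "n \<le> N"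
    and "val_sums v (\<lambda>l. x ^ p ^ l / of_nat (p ^ l)) 0"
  shows "ereal (real p ^ N * a - N) \<le> v (\<Sum>l<N. x ^ p ^ l / of_nat (p ^ l))"
proof (rule val_sums_zero_partial_sum_ge[OF assms(1,7)])
  fix l
  assume "N \<le> l"
  then show "ereal (real p ^ N * a - N) \<le> v (x ^ p ^ l / of_nat (p ^ l))"
    unfolding valuation_AH_log_term[OF assms(1,2,4)]
    using power_mult_minus_mono[of "real p" n a N l] assms(3,5,6) by simp
qed

lemma deg_scaleR_le:
  assumes "x \<in> D" "0 \<le> c"
  shows "deg D (c *\<^sub>R x) \<le> c"
  unfolding deg_def using assms by (intro cInf_lower bdd_belowI[of _ 0]) auto

lemma scaled_vec_of_in_Delta:
  assumes "i < m" "u \<in> I i"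
  shows "real p ^ (m - i - 1) *\<^sub>R vec_of u \<in> Delta p m I"
  unfolding Delta_def using assms by (intro hull_inc) blast

lemma deg_Delta_power_scaled_le:
  assumes "i < m" "u \<in> I i" "m - i \<le> j"
  shows "deg (Delta p m I) (real p ^ j *\<^sub>R vec_of u) \<le> real p ^ (j - (m - i) + 1)"
proof -
  have "deg (Delta p m I) (real p ^ (j - (m - i) + 1) *\<^sub>R (real p ^ (m - i - 1) *\<^sub>R vec_of u))
      \<le> real p ^ (j - (m - i) + 1)"
    using scaled_vec_of_in_Delta[of i m u I p, OF assms(1,2)] by (rule deg_scaleR_le) simp
  moreover have "j = (j - (m - i) + 1) + (m - i - 1)"
    using assms(1,3) by simp
  ultimately show ?thesis
    by (metis power_add scaleR_scaleR)
qed

lemma ord_power_mult_AH_log_partial_sum_ge: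
  assumes "valuation v" "v (of_nat p) = 1" "2 \<le> p"
    and "v x = ereal (1 / (real p ^ (k - 1) * (real p - 1)))" "1 \<le> k" "k \<le> j"
    and "val_sums v (\<lambda>l. x ^ p ^ l / of_nat (p ^ l)) 0"
  shows "ereal (real p ^ (j - k + 2) / (real p - 1) - 1)
           \<le> v (of_nat p ^ j * (\<Sum>l = 0..j. x ^ p ^ l / of_nat (p ^ l)))"
proof -
  define a where "a = 1 / (real p ^ (k - 1) * (real p - 1))"
  have p2: "2 \<le> real p"
    using assms(3) by simp
  have partial: "ereal (real p ^ (j + 1) * a - real (j + 1))
      \<le> v (\<Sum>l<j + 1. x ^ p ^ l / of_nat (p ^ l))"
    using assms(3,5,6) p2
    by (intro AH_log_partial_sum_ord_ge[where n = "k - 1"] assms(1,2,7) assms(4)[folded a_def])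
      (auto simp: a_def)
  have "j + 1 = (j - k + 2) + (k - 1)"
    using assms(5,6) by simp
  then have "real p ^ (j + 1) = real p ^ (j - k + 2) * real p ^ (k - 1)"
    by (metis power_add)
  then have "real p ^ (j + 1) * a = real p ^ (j - k + 2) / (real p - 1)"
    using p2 unfolding a_def by simp
  then have "ereal (real p ^ (j - k + 2) / (real p - 1) - 1)
      = ereal (real j) + ereal (real p ^ (j + 1) * a - real (j + 1))"
    by simp
  also have "\<dots> \<le> v (of_nat p ^ j) + v (\<Sum>l<j + 1. x ^ p ^ l / of_nat (p ^ l))"
    using valuation_power[OF assms(1), of "of_nat p" 1 j] assms(2) add_left_mono[OF partial]
    by (simp only: one_ereal_def mult_1_right)
  also have "\<dots> = v (of_nat p ^ j * (\<Sum>l = 0..j. x ^ p ^ l / of_nat (p ^ l)))"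
    by (simp add: valuation_mult[OF assms(1)] atLeast0AtMost lessThan_Suc_atMost)
  finally show ?thesis .
qed

theorem lemma3p7:
  fixes p m i j :: nat
    and I :: "nat \<Rightarrow> (int ^ 'n) set"
    and u :: "int ^ 'n"
    and ord :: "'a::field_char_0 \<Rightarrow> ereal"
    and \<zeta> :: 'a
    and \<pi> :: "nat \<Rightarrow> 'a"
  assumes p: "prime p"
    and m: "m \<ge> 1"
    and fin: "\<And>k. k < m \<Longrightarrow> finite (I k)"
    and full: "aff_dim (Delta p m I) = int CARD('n)"
    and val: "valuation ord"
    and ordp: "ord (of_nat p) = 1"
    and zeta: "\<zeta> ^ (p ^ m) = 1" "\<And>k. 0 < k \<Longrightarrow> k < p ^ m \<Longrightarrow> \<zeta> ^ k \<noteq> 1"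
    and pi_root: "\<And>l. 1 \<le> l \<Longrightarrow> l \<le> m \<Longrightarrow>
                    val_sums ord (\<lambda>k. \<pi> l ^ (p ^ k) / of_nat (p ^ k)) 0"
    and pi_ord: "\<And>l. 1 \<le> l \<Longrightarrow> l \<le> m \<Longrightarrow>
                    ord (\<pi> l) = ereal (1 / (real p ^ (l - 1) * (real p - 1)))"
    and pi_E: "\<And>l. 1 \<le> l \<Longrightarrow> l \<le> m \<Longrightarrow>
                    val_sums ord (\<lambda>k. of_rat (fps_nth (AH_exp p) k) * \<pi> l ^ k) (\<zeta> ^ (p ^ (m - l)))"
    and i: "i \<le> m - 1"
    and u: "u \<in> I i"
    and j: "j \<ge> m - i"
  shows "ord (of_nat p ^ j * (\<Sum>l = 0..j. \<pi> (m - i) ^ (p ^ l) / of_nat (p ^ l)))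
           - ereal (deg (Delta p m I) ((real p ^ j) *\<^sub>R vec_of u) / (real p - 1))
         \<ge> ereal (real p ^ (j - (m - i) + 1) - 1)"
proof -
  define k where "k = m - i"
  define e where "e = j - k + 1"
  have k: "1 \<le> k" "k \<le> m" "k \<le> j" "j - k + 2 = e + 1"
    using i m j by (auto simp: k_def e_def)
  have p2: "2 \<le> p"
    using prime_ge_2_nat[OF p] .
  then have p2_real: "2 \<le> real p"
    by simp
  have ord_p_gamma: "ereal (real p ^ (e + 1) / (real p - 1) - 1)
      \<le> ord (of_nat p ^ j * (\<Sum>l = 0..j. \<pi> k ^ (p ^ l) / of_nat (p ^ l)))"
    unfolding k(4)[symmetric] using p2 k(1,3)
    by (intro ord_power_mult_AH_log_partial_sum_ge val ordp pi_ord pi_root k(1,2))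
  have "deg (Delta p m I) ((real p ^ j) *\<^sub>R vec_of u) / (real p - 1) \<le> real p ^ e / (real p - 1)"
    using deg_Delta_power_scaled_le[of i m u I j p] i m u j p2_real
    by (simp add: divide_right_mono e_def k_def)
  moreover have "real p ^ (e + 1) / (real p - 1) - 1 = real p ^ e - 1 + real p ^ e / (real p - 1)"
    using p2_real by (simp add: field_simps)
  ultimately have "real p ^ e - 1 + deg (Delta p m I) ((real p ^ j) *\<^sub>R vec_of u) / (real p - 1)
      \<le> real p ^ (e + 1) / (real p - 1) - 1"
    by linarith
  with ord_p_gamma have "ereal (real p ^ e - 1 + deg (Delta p m I) ((real p ^ j) *\<^sub>R vec_of u)
      / (real p - 1)) \<le> ord (of_nat p ^ j * (\<Sum>l = 0..j. \<pi> k ^ (p ^ l) / of_nat (p ^ l)))"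
    using ereal_less_eq(3) order_trans by blast
  then show ?thesis
    unfolding k_def[symmetric] e_def[symmetric] by (subst ereal_le_minus) simp_all
qed

end
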